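(* Let $n\ge5$ be odd, $k=\frac{n-3}{2}$, $G=(V,E)=K_n$, let $C=(v_1,\dots,v_{2k+1})$ be a cycle of length $n-2$ in $G$ and $s,t$ the two vertices not on $C$. Then the $C$-induced constraint $x_{\{s,t\}}+k\cdot x(\delta(V(C)))+\sum_{e\in E[V\setminus\{s,t\}]}\ell(e)x_e\ge 2k+1$ is $(n-1)$-expressing.
   Context: $\delta(V(C))$ is the set of edges with exactly one endpoint on $C$, $E[S]$ the set of edges with both endpoints in $S$, $x(S)=\sum_{e\in S}x_e$. For $i\ne j$, $\ell(\{v_i,v_j\})=|j-i|$ if $|j-i|$ is odd and $2k+1-|j-i|$ otherwise. Expressibility of a constraint $a^\top x\ge b$ valid for the dominant of the odd cycle polytope of $G$: let $\mathcal{T}$ be the set of odd cycles $D$ of $G$ with $a^\top\chi^D=b$. For $Q\subseteq E$, the set $E_Q$ of $Q$-expressible edges is obtained by starting with $E_Q=Q$ and, as long as there exist $e\in E\setminus E_Q$ and $D\in\mathcal{T}$ with $e\in D$ and $D\setminus\{e\}\subseteq E_Q$, adding $e$ to $E_Q$. The constraint is $k'$-expressing if there is $Q\subseteq E$ with $|Q|\le k'$ and $E_Q=E$. *)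

theory Defs
  imports Complex_Main
begin

definition complete_edges :: "'a set \<Rightarrow> 'a set set" where
  "complete_edges V = {{u, w} | u w. u \<in> V \<and> w \<in> V \<and> u \<noteq> w}"

definition odd_cycle :: "'a set \<Rightarrow> 'a set set \<Rightarrow> bool" where
  "odd_cycle V D \<longleftrightarrow> (\<exists>m (w :: nat \<Rightarrow> 'a). odd m \<and> m \<ge> 3 \<and> inj_on w {..<m} \<and>
      w ` {..<m} \<subseteq> V \<and> D = {{w i, w ((i + 1) mod m)} | i. i < m})"

definition tight_cycles :: "'a set \<Rightarrow> ('a set \<Rightarrow> real) \<Rightarrow> real \<Rightarrow> 'a set set set" where
  "tight_cycles V a b = {D. odd_cycle V D \<and> (\<Sum>e\<in>D. a e) = b}"

inductive_set expressible :: "'a set set set \<Rightarrow> 'a set set \<Rightarrow> 'a set set"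
  for T :: "'a set set set" and Q :: "'a set set" where
  base: "e \<in> Q \<Longrightarrow> e \<in> expressible T Q"
| step: "D \<in> T \<Longrightarrow> e \<in> D \<Longrightarrow> (\<forall>f\<in>D - {e}. f \<in> expressible T Q) \<Longrightarrow> e \<in> expressible T Q"

definition k_expressing :: "'a set \<Rightarrow> ('a set \<Rightarrow> real) \<Rightarrow> real \<Rightarrow> nat \<Rightarrow> bool" where
  "k_expressing V a b k' \<longleftrightarrow> (\<exists>Q. Q \<subseteq> complete_edges V \<and> card Q \<le> k' \<and>
      expressible (tight_cycles V a b) Q = complete_edges V)"

definition ell_idx :: "nat \<Rightarrow> nat \<Rightarrow> nat \<Rightarrow> nat" where
  "ell_idx k i j = (let d = (if i \<le> j then j - i else i - j) in
      if odd d then d else 2 * k + 1 - d)"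

definition ell :: "(nat \<Rightarrow> 'a) \<Rightarrow> nat \<Rightarrow> 'a set \<Rightarrow> nat" where
  "ell v k e = (THE l. \<exists>i\<in>{1..2*k+1}. \<exists>j\<in>{1..2*k+1}. i \<noteq> j \<and> e = {v i, v j} \<and> l = ell_idx k i j)"

definition cut_edges :: "'a set \<Rightarrow> 'a set \<Rightarrow> 'a set set" where
  "cut_edges V S = {e \<in> complete_edges V. card (e \<inter> S) = 1}"

definition induced_edges :: "'a set \<Rightarrow> 'a set \<Rightarrow> 'a set set" where
  "induced_edges V S = {e \<in> complete_edges V. e \<subseteq> S}"

definition C_induced_coeff :: "'a set \<Rightarrow> (nat \<Rightarrow> 'a) \<Rightarrow> nat \<Rightarrow> 'a \<Rightarrow> 'a \<Rightarrow> 'a set \<Rightarrow> real" where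
  "C_induced_coeff V v k s t e =
     (if e = {s, t} then 1 else 0)
   + (if e \<in> cut_edges V (v ` {1..2*k+1}) then real k else 0)
   + (if e \<in> induced_edges V (V - {s, t}) then real (ell v k e) else 0)"

end

theory Submission
  imports Defs
begin

text \<open>
  Take as basis Q the 2k edges of the path v_1 ... v_(2k+1), the edge st and the
  edge sv_1; then |Q| = 2k + 2 = n - 1. A run of r consecutive edges of C (each of
  length 1) closed by the chord joining its ends, of even length r and hence of length
  2k + 1 - r, is a tight odd cycle. Taking the whole of C yields the missing edge of C,
  and then the runs yield every chord: a chord of odd length r is closed by the
  complementary run of 2k + 1 - r edges. The tight triangles s v_i v_(i+1)
  (coefficients k + 1 + k) carry sv_1 around to every edge sv_i, and the tight
  triangles s t v_i (coefficients 1 + k + k) give the edges tv_i.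
\<close>

lemma mod_add_left_cancel_less:
  fixes x l l' N :: nat
  assumes "(x + l) mod N = (x + l') mod N" "l < N" "l' < N"
  shows "l = l'"
proof -
  have "l = l'" if "(x + l) mod N = (x + l') mod N" "l \<le> l'" "l' < N" for l l'
  proof -
    have "N dvd l' - l"
      using that(1,2) mod_eq_dvd_iff_nat[of "x + l" "x + l'" N] by simp
    then show ?thesis
      using that(2,3) by (cases "l' - l = 0") (auto dest: dvd_imp_le)
  qed
  from this[of l l'] this[of l' l] show ?thesis
    using assms by (cases "l \<le> l'") auto
qed

lemma expressible_subset:
  assumes "\<And>D. D \<in> T \<Longrightarrow> D \<subseteq> A" "Q \<subseteq> A"
  shows "expressible T Q \<subseteq> A"
proof
  fix e assume "e \<in> expressible T Q"
  then show "e \<in> A"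
    by induction (use assms in auto)
qed

lemma odd_cycle_subset_complete_edges:
  assumes "odd_cycle V D"
  shows "D \<subseteq> complete_edges V"
proof
  fix e assume "e \<in> D"
  obtain m and w :: "nat \<Rightarrow> 'a" where m: "3 \<le> m" "inj_on w {..<m}" "w ` {..<m} \<subseteq> V"
    and D: "D = {{w i, w ((i + 1) mod m)} | i. i < m}"
    using assms unfolding odd_cycle_def by blast
  obtain i where i: "i < m" "e = {w i, w ((i + 1) mod m)}"
    using \<open>e \<in> D\<close> D by blast
  have "(i + 1) mod m < m" "(i + 1) mod m \<noteq> i"
    using m(1) i(1) by (auto simp: mod_Suc)
  then have "w i \<noteq> w ((i + 1) mod m)"
    using inj_onD[OF m(2)] i(1) by fastforce
  moreover have "w i \<in> V" "w ((i + 1) mod m) \<in> V"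
    using m(3) i(1) \<open>(i + 1) mod m < m\<close> by auto
  ultimately show "e \<in> complete_edges V"
    unfolding complete_edges_def i(2) by blast
qed

lemma sum_cycle_edges:
  assumes "3 \<le> (m::nat)" "inj_on w {..<m}"
  shows "(\<Sum>e\<in>{{w i, w ((i + 1) mod m)} | i. i < m}. f e) = (\<Sum>i<m. f {w i, w ((i + 1) mod m)})"
proof -
  have inj: "inj_on (\<lambda>i. {w i, w ((i + 1) mod m)}) {..<m}"
  proof (rule inj_onI)
    fix i j assume ij: "i \<in> {..<m}" "j \<in> {..<m}"
      and eq: "{w i, w ((i + 1) mod m)} = {w j, w ((j + 1) mod m)}"
    have succ: "(i + 1) mod m \<in> {..<m}" "(j + 1) mod m \<in> {..<m}"
      using assms(1) by auto
    from eq consider "w i = w j" | "w i = w ((j + 1) mod m)" "w j = w ((i + 1) mod m)"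
      by (auto simp: doubleton_eq_iff)
    then show "i = j"
    proof cases
      case 1
      then show ?thesis using inj_onD[OF assms(2)] ij by blast
    next
      case 2
      then have "i = (j + 1) mod m" "j = (i + 1) mod m"
        using inj_onD[OF assms(2)] ij succ by auto
      then have "i = (i + 2) mod m"
        by (simp add: mod_Suc_eq)
      then show ?thesis
        using assms(1) ij by (auto simp: mod_if split: if_split_asm)
    qed
  qed
  have "{{w i, w ((i + 1) mod m)} | i. i < m} = (\<lambda>i. {w i, w ((i + 1) mod m)}) ` {..<m}"
    by auto
  then show ?thesis
    by (simp only: sum.reindex[OF inj] comp_def)
qed

lemma triangle_in_tight_cycles:
  assumes "x \<in> V" "y \<in> V" "z \<in> V" "x \<noteq> y" "y \<noteq> z" "x \<noteq> z"
    and "a {x, y} + a {y, z} + a {z, x} = b"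
  shows "{{x, y}, {y, z}, {z, x}} \<in> tight_cycles V a b"
proof -
  define w :: "nat \<Rightarrow> 'a" where "w i = (if i = 0 then x else if i = 1 then y else z)" for i
  have "{{w i, w ((i + 1) mod 3)} | i. i < 3} = (\<lambda>i. {w i, w ((i + 1) mod 3)}) ` {..<3}"
    by blast
  also have "{..<3::nat} = {0, 1, 2}"
    by auto
  also have "(\<lambda>i. {w i, w ((i + 1) mod 3)}) ` {0, 1, 2} = {{x, y}, {y, z}, {z, x}}"
    by (simp add: w_def insert_commute)
  finally have "odd_cycle V {{x, y}, {y, z}, {z, x}}"
    unfolding odd_cycle_def using assms(1-6)
    by (intro exI[of _ 3] exI[of _ w]) (auto simp: inj_on_def w_def)
  moreover have "(\<Sum>e\<in>{{x, y}, {y, z}, {z, x}}. a e) = b"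
    using assms by (simp add: doubleton_eq_iff insert_commute)
  ultimately show ?thesis
    unfolding tight_cycles_def by simp
qed

lemma ell_idx_sym: "ell_idx k i j = ell_idx k j i"
  unfolding ell_idx_def Let_def by auto

lemma ell_eq_ell_idx:
  assumes "inj_on v {1..2*k+1}" "i \<in> {1..2*k+1}" "j \<in> {1..2*k+1}" "i \<noteq> j"
  shows "ell v k {v i, v j} = ell_idx k i j"
  unfolding ell_def
proof (rule the_equality)
  fix l assume "\<exists>i'\<in>{1..2*k+1}. \<exists>j'\<in>{1..2*k+1}. i' \<noteq> j' \<and> {v i, v j} = {v i', v j'} \<and> l = ell_idx k i' j'"
  then obtain i' j' where ij': "i' \<in> {1..2*k+1}" "j' \<in> {1..2*k+1}"
    and eq: "{v i, v j} = {v i', v j'}" and l: "l = ell_idx k i' j'"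
    by blast
  from eq have "(i = i' \<and> j = j') \<or> (i = j' \<and> j = i')"
    using inj_onD[OF assms(1)] assms(2,3) ij' by (auto simp: doubleton_eq_iff)
  then show "l = ell_idx k i j"
    using l ell_idx_sym by metis
qed (use assms in blast)

lemma ell_idx_shift:
  assumes "0 < r" "r < 2*k+1"
  shows "ell_idx k (x mod (2*k+1) + 1) ((x + r) mod (2*k+1) + 1) = (if even r then 2*k+1 - r else r)"
proof -
  define N where "N = 2*k+1"
  define p where "p = x mod N"
  have "p < N"
    unfolding p_def N_def by simp
  have shift: "(x + r) mod N = (p + r) mod N"
    unfolding p_def by (simp add: mod_add_left_eq)
  show ?thesis
  proof (cases "p + r < N")
    case True
    then show ?thesis
      using shift unfolding N_def[symmetric] p_def[symmetric] ell_idx_def Let_def by simp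
  next
    case False
    then have "(p + r) mod N = p + r - N"
      using \<open>p < N\<close> assms(2) by (simp add: le_mod_geq N_def)
    moreover have "odd (N - r) \<longleftrightarrow> even r"
      using assms(2) N_def by presburger
    ultimately show ?thesis
      using shift False assms unfolding N_def[symmetric] p_def[symmetric] ell_idx_def Let_def
      by (auto simp: N_def)
  qed
qed

locale C_induced_setting =
  fixes V :: "'a set" and v :: "nat \<Rightarrow> 'a" and k :: nat and s t :: 'a
  assumes k_pos: "1 \<le> k"
    and inj_v: "inj_on v {1..2*k+1}"
    and cycle_subset: "v ` {1..2*k+1} \<subseteq> V"
    and s_ne_t: "s \<noteq> t"
    and apices: "V - v ` {1..2*k+1} = {s, t}"
begin

definition N :: nat where "N = 2*k+1"

lemma N_ge_3: "3 \<le> N"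
  using k_pos unfolding N_def by simp

lemma odd_N: "odd N"
  unfolding N_def by simp

definition u :: "nat \<Rightarrow> 'a" where "u x = v (x mod N + 1)"

lemma u_index: "x mod N + 1 \<in> {1..2*k+1}"
  using N_ge_3 unfolding N_def by (simp add: Suc_leI)

lemma u_in_cycle: "u x \<in> v ` {1..2*k+1}"
  unfolding u_def by (rule imageI[OF u_index])

lemma u_eq_iff: "u x = u y \<longleftrightarrow> x mod N = y mod N"
  using inj_onD[OF inj_v, of "x mod N + 1" "y mod N + 1"] u_index[of x] u_index[of y]
  unfolding u_def by auto

lemma u_mod [simp]: "u (x mod N) = u x"
  unfolding u_def by simp

lemma u_ne_shift: "0 < r \<Longrightarrow> r < N \<Longrightarrow> u (x + r) \<noteq> u x"
  using mod_add_left_cancel_less[of x r N 0] by (auto simp: u_eq_iff)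

lemma u_in_V: "u x \<in> V"
  using u_in_cycle cycle_subset by blast

lemma u_ne_apex: "u x \<noteq> s" "u x \<noteq> t"
proof -
  have "u x \<notin> V - v ` {1..2*k+1}"
    using u_in_cycle by blast
  then show "u x \<noteq> s" "u x \<noteq> t"
    unfolding apices by auto
qed

lemma apex_in_V: "s \<in> V" "t \<in> V"
  using apices by auto

lemma V_eq: "V = u ` {..<N} \<union> {s, t}"
proof -
  have "v ` {1..2*k+1} \<subseteq> u ` {..<N}"
  proof
    fix c assume "c \<in> v ` {1..2*k+1}"
    then obtain i where "i \<in> {1..2*k+1}" "c = v i" by blast
    then have "i - 1 < N" "c = u (i - 1)"
      unfolding u_def N_def by auto
    then show "c \<in> u ` {..<N}" by blast
  qed
  then have "v ` {1..2*k+1} = u ` {..<N}"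
    using u_in_cycle by blast
  moreover have "V = v ` {1..2*k+1} \<union> {s, t}"
    using apices cycle_subset by blast
  ultimately show ?thesis
    by simp
qed

abbreviation coeff :: "'a set \<Rightarrow> real" where
  "coeff \<equiv> C_induced_coeff V v k s t"

lemma coeff_apex_edge: "coeff {s, t} = 1"
proof -
  have "{s, t} \<inter> v ` {1..2*k+1} = {}"
    using apices by blast
  then show ?thesis
    unfolding C_induced_coeff_def cut_edges_def induced_edges_def by auto
qed

lemma coeff_apex_cycle_edge:
  assumes "z \<in> {s, t}"
  shows "coeff {z, u x} = real k"
proof -
  have "{z, u x} \<noteq> {s, t}"
    using u_ne_apex by (auto simp: doubleton_eq_iff)
  moreover have "{z, u x} \<in> complete_edges V"
    using assms apex_in_V u_in_V u_ne_apex unfolding complete_edges_def by blast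
  moreover have "{z, u x} \<inter> v ` {1..2*k+1} = {u x}"
    using assms apices u_in_cycle by blast
  moreover have "{z, u x} \<notin> induced_edges V (V - {s, t})"
    using assms unfolding induced_edges_def by blast
  ultimately show ?thesis
    unfolding C_induced_coeff_def cut_edges_def by auto
qed

lemma coeff_chord:
  assumes "0 < r" "r < N"
  shows "coeff {u x, u (x + r)} = real (if even r then N - r else r)"
proof -
  have ne: "u x \<noteq> u (x + r)"
    using u_ne_shift[OF assms] by metis
  have "{u x, u (x + r)} \<noteq> {s, t}"
    using u_ne_apex by (auto simp: doubleton_eq_iff)
  moreover have "{u x, u (x + r)} \<inter> v ` {1..2*k+1} = {u x, u (x + r)}"
    using u_in_cycle by blast
  moreover have "{u x, u (x + r)} \<in> induced_edges V (V - {s, t})"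
    using ne u_in_V u_ne_apex unfolding induced_edges_def complete_edges_def by blast
  moreover have "ell v k {u x, u (x + r)} = (if even r then N - r else r)"
  proof -
    have "ell v k {u x, u (x + r)} = ell_idx k (x mod N + 1) ((x + r) mod N + 1)"
      unfolding u_def using ne by (intro ell_eq_ell_idx[OF inj_v u_index u_index]) (auto simp: u_def)
    also have "\<dots> = (if even r then N - r else r)"
      using ell_idx_shift[of r k x] assms unfolding N_def by simp
    finally show ?thesis .
  qed
  ultimately show ?thesis
    using ne unfolding C_induced_coeff_def cut_edges_def by auto
qed

lemma coeff_cycle_edge: "coeff {u x, u (x + 1)} = 1"
  using coeff_chord[of 1] N_ge_3 by simp

abbreviation tight :: "'a set set set" where
  "tight \<equiv> tight_cycles V coeff (real N)"

definition arc_cycle :: "nat \<Rightarrow> nat \<Rightarrow> 'a set set" where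
  "arc_cycle x m = {{u (x + l), u (x + (l + 1) mod m)} | l. l < m}"

lemma arc_cycle_tight:
  assumes m: "odd m" "3 \<le> m" "m \<le> N"
  shows "arc_cycle x m \<in> tight"
proof -
  let ?w = "\<lambda>l. u (x + l)"
  have inj: "inj_on ?w {..<m}"
  proof (rule inj_onI)
    fix l l' assume "l \<in> {..<m}" "l' \<in> {..<m}" "?w l = ?w l'"
    then show "l = l'"
      using m(3) mod_add_left_cancel_less[of x l N l'] by (auto simp: u_eq_iff)
  qed
  have "odd_cycle V (arc_cycle x m)"
    unfolding odd_cycle_def arc_cycle_def using m(1,2) inj u_in_V by blast
  moreover have "(\<Sum>e\<in>arc_cycle x m. coeff e) = real N"
  proof -
    obtain r where r: "m = Suc r" "0 < r" "r < N" "even r"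
      using m by (cases m) auto
    have "(\<Sum>e\<in>arc_cycle x m. coeff e) = (\<Sum>l<m. coeff {?w l, ?w ((l + 1) mod m)})"
      unfolding arc_cycle_def by (rule sum_cycle_edges[OF m(2) inj])
    also have "\<dots> = (\<Sum>l<r. coeff {?w l, ?w (l + 1)}) + coeff {?w r, ?w 0}"
      using r(1) by simp
    also have "(\<Sum>l<r. coeff {?w l, ?w (l + 1)}) = r"
      using coeff_cycle_edge by (simp add: add.assoc)
    also have "coeff {?w r, ?w 0} = real (N - r)"
      using coeff_chord[OF r(2,3), of x] r(4) by (simp add: insert_commute)
    finally show ?thesis
      using r(3) by simp
  qed
  ultimately show ?thesis
    unfolding tight_cycles_def by simp
qed

definition basis :: "'a set set" where
  "basis = (\<lambda>l. {u l, u (l + 1)}) ` {..<2*k} \<union> {{s, t}, {s, u 0}}"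

abbreviation spanned :: "'a set set" where
  "spanned \<equiv> expressible tight basis"

lemma arc_chord_spanned:
  assumes m: "odd m" "3 \<le> m" "m \<le> N"
    and run: "\<And>l. l < m - 1 \<Longrightarrow> {u (x + l), u (x + l + 1)} \<in> spanned"
  shows "{u (x + (m - 1)), u x} \<in> spanned"
proof (rule expressible.step[OF arc_cycle_tight[OF m, of x]])
  have wrap: "(m - 1 + 1) mod m = 0"
    using m(2) by simp
  then show "{u (x + (m - 1)), u x} \<in> arc_cycle x m"
    unfolding arc_cycle_def using m(2) by (intro CollectI exI[of _ "m - 1"]) simp
  show "\<forall>f\<in>arc_cycle x m - {{u (x + (m - 1)), u x}}. f \<in> spanned"
  proof
    fix f assume f: "f \<in> arc_cycle x m - {{u (x + (m - 1)), u x}}"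
    then obtain l where l: "l < m" "f = {u (x + l), u (x + (l + 1) mod m)}"
      unfolding arc_cycle_def by blast
    have "l \<noteq> m - 1"
      using f l wrap by auto
    then have "l < m - 1" "f = {u (x + l), u (x + l + 1)}"
      using l by (simp_all add: add.assoc)
    then show "f \<in> spanned"
      using run by blast
  qed
qed

lemma cycle_edge_spanned: "{u x, u (x + 1)} \<in> spanned"
proof -
  have path: "{u l, u (l + 1)} \<in> spanned" if "l < 2*k" for l
    using that unfolding basis_def by (blast intro: expressible.base)
  have "x mod N < N"
    using N_ge_3 by simp
  then consider "x mod N < 2*k" | "x mod N = 2*k"
    unfolding N_def by linarith
  then show ?thesis
  proof cases
    case 1
    then show ?thesis
      using path[of "x mod N"] u_eq_iff[of "x mod N + 1" "x + 1"] by (simp add: mod_Suc_eq)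
  next
    case 2
    have "{u (0 + (N - 1)), u 0} \<in> spanned"
      using path k_pos by (intro arc_chord_spanned) (simp_all add: odd_N N_ge_3 N_def)
    moreover have "u (x + 1) = u 0"
      using 2 u_eq_iff[of "x + 1" 0] by (simp add: mod_Suc N_def)
    ultimately show ?thesis
      using 2 u_mod[of x] by (simp add: N_def insert_commute)
  qed
qed

lemma chord_spanned:
  assumes r: "0 < r" "r < N"
  shows "{u x, u (x + r)} \<in> spanned"
proof (cases "even r")
  case True
  have "{u (x + (r + 1 - 1)), u x} \<in> spanned"
    using True r odd_N by (intro arc_chord_spanned cycle_edge_spanned) presburger+
  then show ?thesis
    by (simp add: insert_commute)
next
  case False
  \<comment> \<open>close the complementary run of N - r edges from u (x + r) around to u (x + N)\<close>
  have "{u (x + r + (N - r + 1 - 1)), u (x + r)} \<in> spanned"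
    using False r odd_N by (intro arc_chord_spanned cycle_edge_spanned) presburger+
  moreover have "u (x + r + (N - r + 1 - 1)) = u x"
    using r u_eq_iff by simp
  ultimately show ?thesis
    by (simp add: insert_commute)
qed

lemma s_edge_spanned: "{s, u j} \<in> spanned"
proof (induction j)
  case 0
  then show ?case
    unfolding basis_def by (blast intro: expressible.base)
next
  case (Suc j)
  have "coeff {s, u j} + coeff {u j, u (j + 1)} + coeff {u (j + 1), s} = real N"
    using coeff_apex_cycle_edge[of s j] coeff_apex_cycle_edge[of s "j + 1"] coeff_cycle_edge[of j]
    by (simp add: insert_commute N_def)
  then have tri: "{{s, u j}, {u j, u (j + 1)}, {u (j + 1), s}} \<in> tight"
    using apex_in_V u_in_V u_ne_apex u_ne_shift[of 1 j] N_ge_3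
    by (intro triangle_in_tight_cycles) auto
  have "{u (j + 1), s} \<in> spanned"
    by (rule expressible.step[OF tri]) (use Suc.IH cycle_edge_spanned[of j] in auto)
  then show ?case
    by (simp add: insert_commute)
qed

lemma t_edge_spanned: "{t, u j} \<in> spanned"
proof -
  have "coeff {s, t} + coeff {t, u j} + coeff {u j, s} = real N"
    using coeff_apex_edge coeff_apex_cycle_edge[of s j] coeff_apex_cycle_edge[of t j]
    by (simp add: insert_commute N_def)
  then have tri: "{{s, t}, {t, u j}, {u j, s}} \<in> tight"
    using apex_in_V u_in_V u_ne_apex s_ne_t
    by (intro triangle_in_tight_cycles) auto
  have "{s, t} \<in> spanned"
    unfolding basis_def by (blast intro: expressible.base)
  with s_edge_spanned[of j] show ?thesis
    by (intro expressible.step[OF tri]) (auto simp: insert_commute)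
qed

lemma basis_subset: "basis \<subseteq> complete_edges V"
proof -
  have "{u l, u (l + 1)} \<in> complete_edges V" for l
    using u_in_V u_ne_shift[of 1 l] N_ge_3 unfolding complete_edges_def by fastforce
  moreover have "{s, t} \<in> complete_edges V" "{s, u 0} \<in> complete_edges V"
    using apex_in_V u_in_V u_ne_apex s_ne_t unfolding complete_edges_def by fastforce+
  ultimately show ?thesis
    unfolding basis_def by blast
qed

lemma spanned_eq_complete_edges: "spanned = complete_edges V"
proof
  show "spanned \<subseteq> complete_edges V"
    using odd_cycle_subset_complete_edges basis_subset
    by (intro expressible_subset) (auto simp: tight_cycles_def)
  show "complete_edges V \<subseteq> spanned"
  proof
    fix e assume "e \<in> complete_edges V"
    then obtain p q where e: "e = {p, q}" "p \<noteq> q"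
      and pq: "p \<in> u ` {..<N} \<union> {s, t}" "q \<in> u ` {..<N} \<union> {s, t}"
      unfolding complete_edges_def using V_eq by blast
    have cycle: "{u x, u y} \<in> spanned" if "x < N" "y < N" "x \<noteq> y" for x y
      using that chord_spanned[of "y - x" x] chord_spanned[of "x - y" y]
      by (cases "x < y") (auto simp: insert_commute)
    have apex: "{z, u x} \<in> spanned" "{u x, z} \<in> spanned" if "z \<in> {s, t}" for z x
      using that s_edge_spanned t_edge_spanned by (auto simp: insert_commute)
    have "{s, t} \<in> spanned" "{t, s} \<in> spanned"
      unfolding basis_def by (auto simp: insert_commute intro: expressible.base)
    then show "e \<in> spanned"
      using pq e cycle apex by blast
  qed
qed

lemma card_basis: "card basis \<le> 2*k + 2"
proof -
  have "card ((\<lambda>l. {u l, u (l + 1)}) ` {..<2*k}) \<le> 2*k"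
    using card_image_le[of "{..<2*k}"] by simp
  moreover have "card {{s, t}, {s, u 0}} \<le> 2"
    by (simp add: card_insert_if)
  ultimately show ?thesis
    unfolding basis_def using card_Un_le le_trans add_mono by blast
qed

theorem C_induced_constraint_expressing:
  "k_expressing V coeff (real (2*k+1)) (2*k + 2)"
  using basis_subset card_basis spanned_eq_complete_edges
  unfolding k_expressing_def N_def by blast

end

theorem lemma10:
  fixes V :: "'a set" and n k :: nat and v :: "nat \<Rightarrow> 'a" and s t :: 'a
  assumes "finite V" and "card V = n" and "odd n" and "n \<ge> 5"
    and "k = (n - 3) div 2"
    and "inj_on v {1..2*k+1}" and "v ` {1..2*k+1} \<subseteq> V"
    and "s \<noteq> t" and "V - v ` {1..2*k+1} = {s, t}"
  shows "k_expressing V (C_induced_coeff V v k s t) (real (2*k+1)) (n - 1)"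
proof -
  have "n - 1 = 2*k + 2" "1 \<le> k"
    using assms(3-5) by presburger+
  interpret C_induced_setting V v k s t
    using \<open>1 \<le> k\<close> assms(6-9) by unfold_locales
  show ?thesis
    using C_induced_constraint_expressing \<open>n - 1 = 2*k + 2\<close> by simp
qed

end
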